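(* Let $\mathbb{X}\subset\mathbb{R}^m$ be compact and let $f:\mathbb{R}^m\to\mathbb{R}$ be continuous and positive homogeneous. Then for every $\epsilon>0$ there exists a finite-layer HomoMLP $\mathcal{A}'$ with ReLU activations, representing $F_{\mathcal{A}'}$, such that $|F_{\mathcal{A}'}(x)-f(x)|<\epsilon$ for all $x\in\mathbb{X}$.
   Context: A function $g$ is positive homogeneous iff $g(\lambda x)=\lambda g(x)$ for all $x$ and all $\lambda>0$. A HomoMLP is a multilayer perceptron without bias terms whose activation functions are positive homogeneous, i.e. $x\mapsto W_L\,\sigma(W_{L-1}\,\sigma(\cdots\sigma(W_1x)\cdots))$ with $\sigma$ applied coordinatewise (here $\sigma=\mathrm{ReLU}$). *)

theory Defs
  imports "HOL-Analysis.Analysis"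
begin

definition pos_homogeneous :: "('a::real_vector \<Rightarrow> 'b::real_vector) \<Rightarrow> bool" where
  "pos_homogeneous g \<longleftrightarrow> (\<forall>x. \<forall>c::real. c > 0 \<longrightarrow> g (c *\<^sub>R x) = c *\<^sub>R g x)"

definition relu :: "real \<Rightarrow> real" where
  "relu t = max 0 t"

definition matvec :: "real list list \<Rightarrow> real list \<Rightarrow> real list" where
  "matvec W v = map (\<lambda>row. sum_list (map2 (*) row v)) W"

text \<open>A bias-free ReLU MLP x \<mapsto> W_L \<sigma>(W_{L-1} \<sigma>(... \<sigma>(W_1 x))) with input in R^m
  (type real^'m) and scalar output.\<close>

fun hidden_eval :: "real list list list \<Rightarrow> real list \<Rightarrow> real list" where
  "hidden_eval [] v = v"
| "hidden_eval (W # Ws) v = hidden_eval Ws (matvec W (map relu v))"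

definition mlp_eval :: "(real^'m::finite) list \<Rightarrow> real list list list \<Rightarrow> real^'m \<Rightarrow> real list" where
  "mlp_eval W1 Ws x = hidden_eval Ws (map (\<lambda>w. w \<bullet> x) W1)"

fun layers_wf :: "nat \<Rightarrow> real list list list \<Rightarrow> bool" where
  "layers_wf d [] \<longleftrightarrow> d = 1"
| "layers_wf d (W # Ws) \<longleftrightarrow> (\<forall>row\<in>set W. length row = d) \<and> layers_wf (length W) Ws"

definition homo_mlp_wf :: "(real^'m::finite) list \<Rightarrow> real list list list \<Rightarrow> bool" where
  "homo_mlp_wf W1 Ws \<longleftrightarrow> layers_wf (length W1) Ws"

definition homo_mlp_fun :: "(real^'m::finite) list \<Rightarrow> real list list list \<Rightarrow> real^'m \<Rightarrow> real" where
  "homo_mlp_fun W1 Ws x = hd (mlp_eval W1 Ws x)"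

end

theory Submission
  imports Defs
begin

(* The functions computed by bias-free ReLU networks are closed under max and min, since
   max a b = relu (a - b) + relu b - relu (-b), and a positively homogeneous f can be matched at any
   two points x, y by such a network: by a linear function if x and y are linearly independent, and
   otherwise by z \<mapsto> f v relu (t z) + f (-v) relu (-t z) with t z = (v \<bullet> z) / |v|^2, which agrees with f on
   the whole line through v. The lattice version of the Stone-Weierstrass theorem (Kakutani-Krein)
   turns this two-point interpolation into uniform approximation on compact sets. *)

section \<open>Lattice approximation on compact sets\<close>

lemma pointwise_Max_closed:
  assumes "finite D" "D \<noteq> {}" "\<forall>y\<in>D. P (G y)"
    and "\<And>g h. P g \<Longrightarrow> P h \<Longrightarrow> P (\<lambda>x. max (g x) (h x))"
  shows "P (\<lambda>z. Max ((\<lambda>y. G y z) ` D))"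
  using assms(1-3)
proof (induction D rule: finite_ne_induct)
  case (insert y D)
  then show ?case using assms(4)[of "G y"] by simp
qed (simp add: eta_contract_eq)

lemma pointwise_Min_closed:
  assumes "finite D" "D \<noteq> {}" "\<forall>y\<in>D. P (G y)"
    and "\<And>g h. P g \<Longrightarrow> P h \<Longrightarrow> P (\<lambda>x. min (g x) (h x))"
  shows "P (\<lambda>z. Min ((\<lambda>y. G y z) ` D))"
  using assms(1-3)
proof (induction D rule: finite_ne_induct)
  case (insert y D)
  then show ?case using assms(4)[of "G y"] by simp
qed (simp add: eta_contract_eq)

lemma lattice_approx_from_below_at:
  fixes f :: "'a::topological_space \<Rightarrow> real"
  assumes "compact K" and "continuous_on UNIV f"
    and cont: "\<And>g. P g \<Longrightarrow> continuous_on UNIV g"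
    and max: "\<And>g h. P g \<Longrightarrow> P h \<Longrightarrow> P (\<lambda>x. max (g x) (h x))"
    and interp: "\<And>y. y \<in> K \<Longrightarrow> \<exists>g. P g \<and> g x = f x \<and> g y = f y"
    and "x \<in> K" and "\<epsilon> > 0"
  shows "\<exists>h. P h \<and> h x = f x \<and> (\<forall>z\<in>K. f z - \<epsilon> < h z)"
proof -
  obtain G where G: "\<And>y. y \<in> K \<Longrightarrow> P (G y) \<and> G y x = f x \<and> G y y = f y"
    using interp by metis
  have cover: "K \<subseteq> (\<Union>y\<in>K. {z. f z - \<epsilon> < G y z})"
    using G \<open>\<epsilon> > 0\<close> by force
  have "open {z. f z - \<epsilon> < G y z}" if "y \<in> K" for y
    using cont G[OF that] \<open>continuous_on UNIV f\<close>
    by (intro open_Collect_less continuous_on_diff continuous_on_const) auto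
  then obtain D where D: "D \<subseteq> K" "finite D" "K \<subseteq> (\<Union>y\<in>D. {z. f z - \<epsilon> < G y z})"
    using compactE_image[OF \<open>compact K\<close> _ cover] by blast
  then have "D \<noteq> {}" using \<open>x \<in> K\<close> by auto
  define h where "h z = Max ((\<lambda>y. G y z) ` D)" for z
  have "P h"
    unfolding h_def using pointwise_Max_closed[OF D(2) \<open>D \<noteq> {}\<close>, of P G] G D(1) max by blast
  moreover have "(\<lambda>y. G y x) ` D = {f x}"
    using G D(1) \<open>D \<noteq> {}\<close> by (auto simp: subset_iff)
  then have "h x = f x" by (simp add: h_def)
  moreover have "f z - \<epsilon> < h z" if "z \<in> K" for z
  proof -
    obtain y where "y \<in> D" "f z - \<epsilon> < G y z" using D(3) \<open>z \<in> K\<close> by blast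
    moreover have "G y z \<le> h z" unfolding h_def using D(2) \<open>y \<in> D\<close> by simp
    ultimately show ?thesis by linarith
  qed
  ultimately show ?thesis by blast
qed

theorem lattice_Stone_Weierstrass:
  fixes f :: "'a::topological_space \<Rightarrow> real"
  assumes "compact K" and "K \<noteq> {}" and "continuous_on UNIV f"
    and cont: "\<And>g. P g \<Longrightarrow> continuous_on UNIV g"
    and max: "\<And>g h. P g \<Longrightarrow> P h \<Longrightarrow> P (\<lambda>x. max (g x) (h x))"
    and min: "\<And>g h. P g \<Longrightarrow> P h \<Longrightarrow> P (\<lambda>x. min (g x) (h x))"
    and interp: "\<And>x y. x \<in> K \<Longrightarrow> y \<in> K \<Longrightarrow> \<exists>g. P g \<and> g x = f x \<and> g y = f y"
    and "\<epsilon> > 0"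
  shows "\<exists>g. P g \<and> (\<forall>x\<in>K. \<bar>g x - f x\<bar> < \<epsilon>)"
proof -
  have "\<exists>h. P h \<and> h x = f x \<and> (\<forall>z\<in>K. f z - \<epsilon> < h z)" if "x \<in> K" for x
    using lattice_approx_from_below_at[of K f P x \<epsilon>] assms that by blast
  then obtain H where H: "\<And>x. x \<in> K \<Longrightarrow> P (H x) \<and> H x x = f x \<and> (\<forall>z\<in>K. f z - \<epsilon> < H x z)"
    by metis
  have cover: "K \<subseteq> (\<Union>x\<in>K. {z. H x z < f z + \<epsilon>})"
    using H \<open>\<epsilon> > 0\<close> by force
  have "open {z. H x z < f z + \<epsilon>}" if "x \<in> K" for x
    using cont H[OF that] \<open>continuous_on UNIV f\<close>
    by (intro open_Collect_less continuous_on_add continuous_on_const) auto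
  then obtain D where D: "D \<subseteq> K" "finite D" "K \<subseteq> (\<Union>x\<in>D. {z. H x z < f z + \<epsilon>})"
    using compactE_image[OF \<open>compact K\<close> _ cover] by blast
  then have "D \<noteq> {}" using \<open>K \<noteq> {}\<close> by auto
  define g where "g z = Min ((\<lambda>x. H x z) ` D)" for z
  have "P g"
    unfolding g_def using pointwise_Min_closed[OF D(2) \<open>D \<noteq> {}\<close>, of P H] H D(1) min by blast
  moreover have "\<bar>g z - f z\<bar> < \<epsilon>" if "z \<in> K" for z
  proof -
    obtain x where "x \<in> D" "H x z < f z + \<epsilon>" using D(3) \<open>z \<in> K\<close> by blast
    moreover have "g z \<le> H x z" unfolding g_def using D(2) \<open>x \<in> D\<close> by simp
    moreover have "f z - \<epsilon> < g z"
      unfolding g_def using D \<open>D \<noteq> {}\<close> H \<open>z \<in> K\<close> by (subst Min_gr_iff) auto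
    ultimately show ?thesis by linarith
  qed
  ultimately show ?thesis by blast
qed

section \<open>Functions computed by bias-free ReLU networks\<close>

fun relu_net :: "nat \<Rightarrow> (real^'m::finite \<Rightarrow> real) \<Rightarrow> bool" where
  "relu_net 0 g \<longleftrightarrow> (\<exists>w. g = (\<lambda>x. w \<bullet> x))"
| "relu_net (Suc k) g \<longleftrightarrow>
    (\<exists>n c q. (\<forall>i<(n::nat). relu_net k (q i)) \<and> g = (\<lambda>x. \<Sum>i<n. c i * relu (q i x)))"

declare relu_net.simps(2) [simp del]

lemma relu_net_SucI:
  "(\<And>i. i < (n::nat) \<Longrightarrow> relu_net k (q i)) \<Longrightarrow> g = (\<lambda>x. \<Sum>i<n. c i * relu (q i x)) \<Longrightarrow> relu_net (Suc k) g"
  unfolding relu_net.simps(2) by blast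

definition relu_net_fun :: "(real^'m::finite \<Rightarrow> real) \<Rightarrow> bool" where
  "relu_net_fun g \<longleftrightarrow> (\<exists>k. relu_net k g)"

lemma relu_net_zero: "relu_net k (\<lambda>x. 0)"
  by (cases k) (auto intro: relu_net_SucI[where n = 0] exI[of _ 0] simp: fun_eq_iff)

lemma relu_net_cmult:
  assumes "relu_net k g"
  shows "relu_net k (\<lambda>x. a * g x)"
proof (cases k)
  case 0
  with assms show ?thesis by (auto intro: exI[of _ "a *\<^sub>R _"] simp: fun_eq_iff)
next
  case (Suc j)
  from assms obtain n :: nat and c q where "\<forall>i<n. relu_net j (q i)" "g = (\<lambda>x. \<Sum>i<n. c i * relu (q i x))"
    unfolding Suc relu_net.simps(2) by blast
  then show ?thesis
    unfolding Suc by (auto intro!: relu_net_SucI[where n = n and c = "\<lambda>i. a * c i" and q = q] simp: sum_distrib_left mult.assoc)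
qed

lemma relu_net_add:
  assumes "relu_net k g" and "relu_net k h"
  shows "relu_net k (\<lambda>x. g x + h x)"
proof (cases k)
  case 0
  with assms show ?thesis
    by (auto intro: exI[of _ "_ + _"] simp: fun_eq_iff inner_add_left)
next
  case (Suc j)
  obtain n1 :: nat and c1 q1 where q1: "\<forall>i<n1. relu_net j (q1 i)" "g = (\<lambda>x. \<Sum>i<n1. c1 i * relu (q1 i x))"
    using \<open>relu_net k g\<close> unfolding Suc relu_net.simps(2) by blast
  obtain n2 :: nat and c2 q2 where q2: "\<forall>i<n2. relu_net j (q2 i)" "h = (\<lambda>x. \<Sum>i<n2. c2 i * relu (q2 i x))"
    using \<open>relu_net k h\<close> unfolding Suc relu_net.simps(2) by blast
  define c where "c i = (if i < n1 then c1 i else c2 (i - n1))" for i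
  define q where "q i = (if i < n1 then q1 i else q2 (i - n1))" for i
  have split: "(\<Sum>i<n1 + n2. F i) = (\<Sum>i<n1. F i) + (\<Sum>i<n2. F (n1 + i))" for F :: "nat \<Rightarrow> real"
    by (induction n2) (auto simp: ac_simps)
  show ?thesis unfolding Suc
  proof (rule relu_net_SucI[where n = "n1 + n2" and c = c and q = q])
    show "relu_net j (q i)" if "i < n1 + n2" for i
      using q1 q2 that by (auto simp: q_def)
    show "(\<lambda>x. g x + h x) = (\<lambda>x. \<Sum>i<n1 + n2. c i * relu (q i x))"
      unfolding split by (simp add: q1 q2 c_def q_def)
  qed
qed

lemma relu_net_Suc: "relu_net k g \<Longrightarrow> relu_net (Suc k) g"
proof (rule relu_net_SucI[where n = 2 and q = "\<lambda>i x. (-1) ^ i * g x" and c = "\<lambda>i. (-1) ^ i"])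
  show "relu_net k ((\<lambda>i x. (-1) ^ i * g x) i)" if "relu_net k g" for i
    using relu_net_cmult[OF that] by simp
  have "relu t - relu (- t) = t" for t
    by (simp add: relu_def)
  then show "g = (\<lambda>x. \<Sum>i<2. (-1) ^ i * relu ((-1) ^ i * g x))"
    by (simp add: numeral_2_eq_2)
qed

lemma relu_net_mono: "k \<le> l \<Longrightarrow> relu_net k g \<Longrightarrow> relu_net l g"
  by (induction l rule: dec_induct) (auto intro: relu_net_Suc)

lemma relu_net_max:
  assumes "relu_net k g" and "relu_net k h"
  shows "relu_net (Suc k) (\<lambda>x. max (g x) (h x))"
proof (rule relu_net_SucI[where n = 3])
  have "relu_net k (\<lambda>x. - h x)"
    using relu_net_cmult[OF assms(2), of "-1"] by simp
  moreover from relu_net_add[OF assms(1) this] have "relu_net k (\<lambda>x. g x - h x)"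
    by simp
  moreover define q where "q i = [\<lambda>x. g x - h x, h, \<lambda>x. - h x] ! i" for i
  ultimately show "relu_net k (q i)" if "i < 3" for i
    using that assms by (auto simp: q_def less_Suc_eq numeral_3_eq_3)
  show "(\<lambda>x. max (g x) (h x)) = (\<lambda>x. \<Sum>i<3. [1, 1, -1] ! i * relu (q i x))"
    by (auto simp: numeral_3_eq_3 q_def relu_def)
qed

lemma relu_net_min:
  assumes "relu_net k g" and "relu_net k h"
  shows "relu_net (Suc k) (\<lambda>x. min (g x) (h x))"
proof -
  have "relu_net (Suc k) (\<lambda>x. -1 * max (-1 * g x) (-1 * h x))"
    using assms by (intro relu_net_cmult relu_net_max)
  moreover have "-1 * max (-1 * a) (-1 * b) = min a b" for a b :: real
    by simp
  ultimately show ?thesis by simp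
qed

lemma relu_net_fun_max: "relu_net_fun g \<Longrightarrow> relu_net_fun h \<Longrightarrow> relu_net_fun (\<lambda>x. max (g x) (h x))"
  unfolding relu_net_fun_def
  by (metis max.cobounded1 max.cobounded2 relu_net_max relu_net_mono)

lemma relu_net_fun_min: "relu_net_fun g \<Longrightarrow> relu_net_fun h \<Longrightarrow> relu_net_fun (\<lambda>x. min (g x) (h x))"
  unfolding relu_net_fun_def
  by (metis max.cobounded1 max.cobounded2 relu_net_min relu_net_mono)

lemma continuous_on_relu_net: "relu_net k g \<Longrightarrow> continuous_on UNIV g"
proof (induction k arbitrary: g)
  case 0
  then show ?case by (auto intro!: continuous_on_inner continuous_on_const continuous_on_id)
next
  case (Suc k)
  then obtain n :: nat and c q where "\<forall>i<n. relu_net k (q i)" "g = (\<lambda>x. \<Sum>i<n. c i * relu (q i x))"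
    unfolding relu_net.simps(2) by blast
  then show ?case
    unfolding relu_def using Suc.IH
    by (auto intro!: continuous_on_sum continuous_on_mult continuous_on_max continuous_on_const)
qed

section \<open>Realization as a layered network\<close>

fun layers_between :: "nat \<Rightarrow> real list list list \<Rightarrow> nat \<Rightarrow> bool" where
  "layers_between d [] e \<longleftrightarrow> d = e"
| "layers_between d (W # Ws) e \<longleftrightarrow> (\<forall>row\<in>set W. length row = d) \<and> layers_between (length W) Ws e"

lemma layers_wf_iff_layers_between: "layers_wf d Ws \<longleftrightarrow> layers_between d Ws 1"
  by (induction Ws arbitrary: d) auto

lemma layers_between_snoc:
  "layers_between d Ws e \<Longrightarrow> \<forall>row\<in>set W. length row = e \<Longrightarrow> layers_between d (Ws @ [W]) (length W)"
  by (induction Ws arbitrary: d) auto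

lemma hidden_eval_snoc: "hidden_eval (Ws @ [W]) v = matvec W (map relu (hidden_eval Ws v))"
  by (induction Ws arbitrary: v) auto

lemma sum_list_map2_times_upt:
  "sum_list (map2 (*) (map f [0..<N]) (map g [0..<N])) = (\<Sum>t<N. f t * (g t :: real))"
proof -
  have "map2 (*) (map f xs) (map g xs) = map (\<lambda>t. f t * g t) xs" for xs :: "nat list"
    by (induction xs) auto
  then show ?thesis by (simp add: sum_list_distinct_conv_sum_set atLeast0LessThan)
qed

lemma sum_lessThan_mult_if_div:
  fixes G :: "nat \<Rightarrow> 'a::comm_monoid_add"
  assumes "i < n"
  shows "(\<Sum>t<n*M. if t div M = i then G (t mod M) else 0) = (\<Sum>j<M. G j)"
proof -
  have "{t\<in>{..<n*M}. t div M = i} = {i*M..<M + i*M}"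
  proof (cases "M = 0")
    case False
    have div_iff: "t div M = i \<longleftrightarrow> i*M \<le> t \<and> t < M + i*M" for t
    proof
      assume "t div M = i"
      then show "i*M \<le> t \<and> t < M + i*M"
        using div_times_less_eq_dividend[of t M] dividend_less_div_times[of M t] False by auto
    qed (simp add: div_nat_eqI mult.commute)
    have "M + i*M \<le> n*M" using assms by (metis Suc_leI mult_Suc mult_le_mono1)
    then show ?thesis unfolding div_iff by (auto intro: less_le_trans)
  qed simp
  then have "(\<Sum>t<n*M. if t div M = i then G (t mod M) else 0) = (\<Sum>t=0+i*M..<M + i*M. G (t mod M))"
    by (simp add: sum.inter_filter[symmetric])
  also have "\<dots> = (\<Sum>j<M. G j)"
    by (simp only: sum.shift_bounds_nat_ivl) (simp add: atLeast0LessThan)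
  finally show ?thesis .
qed

lemma relu_net_Suc_padded:
  assumes "relu_net (Suc k) g"
  obtains N where "\<And>M::nat. N \<le> M \<Longrightarrow>
    \<exists>c q. (\<forall>j<M. relu_net k (q j)) \<and> g = (\<lambda>x. \<Sum>j<M. c j * relu (q j x))"
proof -
  obtain N :: nat and c q where q: "\<forall>j<N. relu_net k (q j)" "g = (\<lambda>x. \<Sum>j<N. c j * relu (q j x))"
    using assms unfolding relu_net.simps(2) by blast
  have "\<exists>c q. (\<forall>j<M. relu_net k (q j)) \<and> g = (\<lambda>x. \<Sum>j<M. c j * relu (q j x))" if "N \<le> M" for M
  proof (intro exI conjI)
    define c' where "c' j = (if j < N then c j else 0)" for j
    define q' where "q' j = (if j < N then q j else (\<lambda>x. 0))" for j
    show "\<forall>j<M. relu_net k (q' j)"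
      using q(1) by (simp add: q'_def relu_net_zero)
    show "g = (\<lambda>x. \<Sum>j<M. c' j * relu (q' j x))"
      using \<open>N \<le> M\<close> unfolding q(2) c'_def q'_def
      by (intro ext sum.mono_neutral_cong_left) auto
  qed
  then show ?thesis by (rule that)
qed

lemma relu_net_Suc_common_width:
  fixes n :: nat
  assumes "\<forall>i<n. relu_net (Suc k) (F i)"
  obtains M :: nat and c q where "\<forall>i<n. \<forall>j<M. relu_net k (q i j)"
    and "\<forall>i<n. F i = (\<lambda>x. \<Sum>j<M. c i j * relu (q i j x))"
proof -
  have "\<forall>i<n. \<exists>Ni. \<forall>M::nat. Ni \<le> M \<longrightarrow>
      (\<exists>c q. (\<forall>j<M. relu_net k (q j)) \<and> F i = (\<lambda>x. \<Sum>j<M. c j * relu (q j x)))"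
  proof (intro allI impI)
    fix i assume "i < n"
    then have "relu_net (Suc k) (F i)" using assms by blast
    then show "\<exists>Ni. \<forall>M::nat. Ni \<le> M \<longrightarrow>
        (\<exists>c q. (\<forall>j<M. relu_net k (q j)) \<and> F i = (\<lambda>x. \<Sum>j<M. c j * relu (q j x)))"
      by (elim relu_net_Suc_padded) blast
  qed
  then obtain N where N: "\<forall>i<n. \<forall>M::nat. N i \<le> M \<longrightarrow>
      (\<exists>c q. (\<forall>j<M. relu_net k (q j)) \<and> F i = (\<lambda>x. \<Sum>j<M. c j * relu (q j x)))"
    unfolding choice_iff' by blast
  define M where "M = (\<Sum>i<n. N i)"
  have "\<forall>i<n. \<exists>c q. (\<forall>j<M. relu_net k (q j)) \<and> F i = (\<lambda>x. \<Sum>j<M. c j * relu (q j x))"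
  proof (intro allI impI)
    fix i assume "i < n"
    then have "N i \<le> M" unfolding M_def by (intro member_le_sum) auto
    with N \<open>i < n\<close> show "\<exists>c q. (\<forall>j<M. relu_net k (q j)) \<and> F i = (\<lambda>x. \<Sum>j<M. c j * relu (q j x))"
      by blast
  qed
  then obtain c q where "\<forall>i<n. (\<forall>j<M. relu_net k (q i j)) \<and> F i = (\<lambda>x. \<Sum>j<M. c i j * relu (q i j x))"
    unfolding choice_iff' by blast
  then show ?thesis
    using that[of M q c] by blast
qed

lemma relu_net_family_realizable:
  assumes "\<forall>i<n. relu_net k (F i)"
  shows "\<exists>W1 Ws. layers_between (length W1) Ws n \<and> (\<forall>x. mlp_eval W1 Ws x = map (\<lambda>i. F i x) [0..<n])"
  using assms
proof (induction k arbitrary: n F)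
  case 0
  then have "\<exists>w. \<forall>i<n. F i = (\<lambda>x. w i \<bullet> x)"
    by (simp only: relu_net.simps(1) choice_iff')
  then obtain w where "\<forall>i<n. F i = (\<lambda>x. w i \<bullet> x)"
    by blast
  then have "map (\<lambda>i. F i x) [0..<n] = map (\<lambda>i. w i \<bullet> x) [0..<n]" for x
    by simp
  then show ?case
    by (intro exI[of _ "map w [0..<n]"] exI[of _ "[]"]) (simp add: mlp_eval_def)
next
  case (Suc k)
  obtain M :: nat and c q where q: "\<forall>i<n. \<forall>j<M. relu_net k (q i j)"
    and F_eq: "\<forall>i<n. F i = (\<lambda>x. \<Sum>j<M. c i j * relu (q i j x))"
    by (rule relu_net_Suc_common_width[OF Suc.prems])
  \<comment> \<open>Hidden unit t = i * M + j computes q i j; row i of the new last layer R reads off block i.\<close>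
  define Q where "Q t = q (t div M) (t mod M)" for t
  have "\<forall>t<n*M. relu_net k (Q t)"
  proof (intro allI impI)
    fix t assume "t < n*M"
    then have "M > 0" by (cases "M = 0") auto
    with \<open>t < n*M\<close> have "t div M < n" "t mod M < M"
      by (simp_all add: div_less_iff_less_mult)
    then show "relu_net k (Q t)" using q by (simp add: Q_def)
  qed
  then obtain W1 Ws where W: "layers_between (length W1) Ws (n*M)"
      "\<forall>x. mlp_eval W1 Ws x = map (\<lambda>t. Q t x) [0..<n*M]"
    using Suc.IH by blast
  define R where "R = map (\<lambda>i. map (\<lambda>t. if t div M = i then c i (t mod M) else 0) [0..<n*M]) [0..<n]"
  have F: "F i x = (\<Sum>t<n*M. (if t div M = i then c i (t mod M) else 0) * relu (Q t x))"
    if "i < n" for i x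
  proof -
    have "(\<Sum>t<n*M. (if t div M = i then c i (t mod M) else 0) * relu (Q t x))
        = (\<Sum>t<n*M. if t div M = i then c i (t mod M) * relu (q i (t mod M) x) else 0)"
      by (intro sum.cong) (auto simp: Q_def)
    also have "\<dots> = (\<Sum>j<M. c i j * relu (q i j x))"
      using sum_lessThan_mult_if_div[OF that, of M "\<lambda>j. c i j * relu (q i j x)"] by simp
    finally show ?thesis using F_eq that by simp
  qed
  show ?case
  proof (intro exI conjI allI)
    show "layers_between (length W1) (Ws @ [R]) n"
      using layers_between_snoc[OF W(1), of R] by (simp add: R_def)
    show "mlp_eval W1 (Ws @ [R]) x = map (\<lambda>i. F i x) [0..<n]" for x
      using W(2) unfolding mlp_eval_def hidden_eval_snoc
      by (simp add: matvec_def R_def F o_def sum_list_map2_times_upt)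
  qed
qed

lemma relu_net_realizable:
  assumes "relu_net k g"
  obtains W1 Ws where "homo_mlp_wf W1 Ws" and "homo_mlp_fun W1 Ws = g"
proof -
  obtain W1 Ws where "layers_between (length W1) Ws 1" "\<forall>x. mlp_eval W1 Ws x = [g x]"
    using relu_net_family_realizable[of 1 k "\<lambda>_. g"] assms by auto
  then show ?thesis
    using that by (simp add: homo_mlp_wf_def homo_mlp_fun_def layers_wf_iff_layers_between fun_eq_iff)
qed

section \<open>Two-point interpolation of positively homogeneous functions\<close>

lemma pos_homogeneous_zero:
  fixes f :: "'a::real_vector \<Rightarrow> 'b::real_vector"
  assumes "pos_homogeneous f"
  shows "f 0 = 0"
proof -
  have "f 0 = 2 *\<^sub>R f 0"
    using assms unfolding pos_homogeneous_def by (metis scaleR_zero_right zero_less_numeral)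
  then show ?thesis by (simp add: scaleR_2)
qed

lemma pos_homogeneous_on_line:
  fixes f :: "'a::real_vector \<Rightarrow> real"
  assumes "pos_homogeneous f"
  shows "f (c *\<^sub>R x) = f x * relu c + f (-x) * relu (-c)"
proof -
  have hom: "f (a *\<^sub>R y) = a * f y" if "a > 0" for a y
    using assms that unfolding pos_homogeneous_def by simp
  consider "c > 0" | "c = 0" | "c < 0" by linarith
  then show ?thesis
  proof cases
    case 3
    then have "f (c *\<^sub>R x) = f ((-c) *\<^sub>R (-x))" by simp
    then show ?thesis using hom[of "-c" "-x"] 3 by (simp add: relu_def)
  qed (simp_all add: hom relu_def pos_homogeneous_zero[OF assms])
qed

definition line_interpolant :: "(real^'m::finite \<Rightarrow> real) \<Rightarrow> real^'m \<Rightarrow> real^'m \<Rightarrow> real" where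
  "line_interpolant f v z = f v * relu ((v \<bullet> z) / (v \<bullet> v)) + f (-v) * relu (- (v \<bullet> z) / (v \<bullet> v))"

lemma relu_net_line_interpolant: "relu_net (Suc 0) (line_interpolant f v)"
proof (rule relu_net_SucI[where n = 2])
  define u where "u = v /\<^sub>R (v \<bullet> v)"
  show "relu_net 0 ([\<lambda>z. u \<bullet> z, \<lambda>z. (-u) \<bullet> z] ! i)" if "i < 2" for i
    using that by (auto simp: less_2_cases_iff fun_eq_iff intro: exI[of _ "-u"])
  show "line_interpolant f v = (\<lambda>z. \<Sum>i<2. [f v, f (-v)] ! i * relu (([\<lambda>z. u \<bullet> z, \<lambda>z. (-u) \<bullet> z] ! i) z))"
    by (simp add: fun_eq_iff numeral_2_eq_2 line_interpolant_def u_def divide_inverse mult.commute)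
qed

lemma line_interpolant_on_line:
  assumes "pos_homogeneous f" and "v \<noteq> 0"
  shows "line_interpolant f v (c *\<^sub>R v) = f (c *\<^sub>R v)"
  using assms by (simp add: line_interpolant_def pos_homogeneous_on_line)

lemma inner_interpolates_two_points:
  fixes x y :: "'a::euclidean_space"
  assumes "x \<noteq> 0" and "y \<notin> span {x}"
  shows "\<exists>w. w \<bullet> x = a \<and> w \<bullet> y = b"
proof -
  have "independent {x, y}"
    using assms by (simp add: insert_commute[of x y] independent_insert)
  moreover have "x \<noteq> y" using assms(2) span_base by blast
  ultimately obtain g where g: "linear g" "g x = a" "g y = b"
    using linear_independent_extend[of "{x, y}" "\<lambda>z. if z = x then a else b"] by auto
  have "adjoint g 1 \<bullet> z = g z" for z
    using adjoint_clauses(2)[OF g(1), of 1 z] by simp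
  then show ?thesis using g by blast
qed

lemma relu_net_fun_interpolates:
  fixes f :: "real^'m::finite \<Rightarrow> real"
  assumes "pos_homogeneous f"
  shows "\<exists>g. relu_net_fun g \<and> g x = f x \<and> g y = f y"
proof -
  consider "x = 0" "y = 0"
    | v a b where "v \<noteq> 0" "x = a *\<^sub>R v" "y = b *\<^sub>R v"
    | "x \<noteq> 0" "y \<notin> span {x}"
  proof (cases "x = 0")
    case True
    then show ?thesis using that(1) that(2)[of y 0 1] by (cases "y = 0") auto
  next
    case False
    show ?thesis
    proof (cases "y \<in> span {x}")
      case True
      then obtain b where "y = b *\<^sub>R x" by (auto simp: span_singleton)
      then show ?thesis using that(2)[of x 1 b] False by simp
    qed (use False that(3) in blast)
  qed
  then show ?thesis
  proof cases
    case 1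
    then show ?thesis
      using pos_homogeneous_zero[OF assms] relu_net_zero unfolding relu_net_fun_def
      by (intro exI[of _ "\<lambda>z. 0"]) auto
  next
    case 2
    then show ?thesis
      using relu_net_line_interpolant line_interpolant_on_line[OF assms]
      unfolding relu_net_fun_def by (intro exI[of _ "line_interpolant f v"]) auto
  next
    case 3
    then obtain w where "w \<bullet> x = f x" "w \<bullet> y = f y"
      using inner_interpolates_two_points by blast
    moreover have "relu_net_fun (\<lambda>z. w \<bullet> z)"
      unfolding relu_net_fun_def by (rule exI[of _ 0]) auto
    ultimately show ?thesis by (intro exI[of _ "\<lambda>z. w \<bullet> z"]) auto
  qed
qed

theorem mainTheorem6:
  fixes X :: "(real^'m) set" and f :: "real^'m \<Rightarrow> real" and \<epsilon> :: real
  assumes "compact X"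
    and "continuous_on UNIV f"
    and "pos_homogeneous f"
    and "\<epsilon> > 0"
  shows "\<exists>W1 Ws. homo_mlp_wf W1 Ws \<and> (\<forall>x\<in>X. \<bar>homo_mlp_fun W1 Ws x - f x\<bar> < \<epsilon>)"
proof -
  have "\<exists>g. relu_net_fun g \<and> (\<forall>x\<in>insert 0 X. \<bar>g x - f x\<bar> < \<epsilon>)"
  proof (rule lattice_Stone_Weierstrass)
    show "compact (insert 0 X)" using \<open>compact X\<close> by (rule compact_insert)
    show "continuous_on UNIV g" if "relu_net_fun g" for g :: "real^'m \<Rightarrow> real"
      using that continuous_on_relu_net unfolding relu_net_fun_def by blast
    show "\<exists>g. relu_net_fun g \<and> g x = f x \<and> g y = f y" for x y
      using relu_net_fun_interpolates[OF \<open>pos_homogeneous f\<close>] by blast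
  qed (use assms relu_net_fun_max relu_net_fun_min in auto)
  then obtain g k where "relu_net k g" and g: "\<forall>x\<in>X. \<bar>g x - f x\<bar> < \<epsilon>"
    unfolding relu_net_fun_def by blast
  then obtain W1 Ws where "homo_mlp_wf W1 Ws" and "homo_mlp_fun W1 Ws = g"
    by (elim relu_net_realizable)
  then show ?thesis using g by blast
qed

end
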